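(* Every non-zero element of $\mathbb{C}^{\mathbb{Z}}_{\mathrm{fin}}$ is generic.
   Context: $\mathbb{Z}$ acts on $\mathbb{C}^{\mathbb{Z}}$ by $n\cdot(a_i)_{i\in\mathbb{Z}}=(a_{i+n})_{i\in\mathbb{Z}}$; the elements $n\cdot\mathbf{a}$ are the $\mathbb{Z}$-translates of $\mathbf{a}$. $\mathbb{C}^{\mathbb{Z}}_{\mathrm{fin}}$ is the subspace of $\mathbb{C}^{\mathbb{Z}}$ of sequences with only finitely many non-zero entries. An element $\mathbf{a}\in\mathbb{C}^{\mathbb{Z}}$ is generic if the multiset of all its $\mathbb{Z}$-translates is linearly independent. *)

theory Defs
  imports Complex_Main
begin

definition shift :: "int \<Rightarrow> (int \<Rightarrow> complex) \<Rightarrow> (int \<Rightarrow> complex)" where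
  "shift n a = (\<lambda>i. a (i + n))"

definition fin_supp :: "(int \<Rightarrow> complex) \<Rightarrow> bool" where
  "fin_supp a \<longleftrightarrow> finite {i. a i \<noteq> 0}"

text \<open>Generic: the family (n . a) indexed by n in Z (a multiset, repetitions counted)
  is linearly independent over C: every finite linear combination that vanishes
  has all coefficients zero.\<close>
definition generic :: "(int \<Rightarrow> complex) \<Rightarrow> bool" where
  "generic a \<longleftrightarrow>
     (\<forall>S c. finite S \<longrightarrow> (\<forall>i. (\<Sum>n\<in>S. c n * shift n a i) = 0) \<longrightarrow> (\<forall>n\<in>S. c n = 0))"

end

theory Submission
  imports Defs
begin

text \<open>Let \<open>m\<close> be the last index of the support of \<open>a\<close>. In a vanishing finite combination
  \<open>\<Sum>n\<in>S. c n \<cdot> (n \<cdot> a)\<close>, let \<open>n\<^sub>0\<close> be the least shift with a non-zero coefficient.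
  At position \<open>m - n\<^sub>0\<close> every other shift with a non-zero coefficient reads \<open>a\<close> beyond \<open>m\<close>,
  so the combination there equals \<open>c n\<^sub>0 \<cdot> a m \<noteq> 0\<close>.\<close>

lemma fin_supp_obtain_last_nonzero:
  assumes "fin_supp a" and "a \<noteq> (\<lambda>i. 0)"
  obtains m where "a m \<noteq> 0" and "\<And>j. m < j \<Longrightarrow> a j = 0"
proof
  define A where "A = {i. a i \<noteq> 0}"
  have fin: "finite A" and ne: "A \<noteq> {}"
    using assms unfolding fin_supp_def A_def by auto
  show "a (Max A) \<noteq> 0"
    using Max_in[OF fin ne] unfolding A_def by simp
  show "a j = 0" if "Max A < j" for j
    using Max_ge[OF fin, of j] that unfolding A_def by fastforce
qed

lemma sum_shift_leading_term:
  assumes "finite S" and "n\<^sub>0 \<in> S"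
    and least: "\<And>k. k \<in> S \<Longrightarrow> c k \<noteq> 0 \<Longrightarrow> n\<^sub>0 \<le> k"
    and vanish_above: "\<And>j. m < j \<Longrightarrow> a j = 0"
  shows "(\<Sum>k\<in>S. c k * shift k a (m - n\<^sub>0)) = c n\<^sub>0 * a m"
proof -
  have rest: "\<forall>k\<in>S - {n\<^sub>0}. c k * shift k a (m - n\<^sub>0) = 0"
  proof
    fix k
    assume k: "k \<in> S - {n\<^sub>0}"
    show "c k * shift k a (m - n\<^sub>0) = 0"
    proof (cases "c k = 0")
      case False
      with k least[of k] have "n\<^sub>0 < k" by auto
      then show ?thesis using vanish_above[of "m - n\<^sub>0 + k"] by (simp add: shift_def)
    qed simp
  qed
  show ?thesis
    using sum.remove[OF assms(1,2), of "\<lambda>k. c k * shift k a (m - n\<^sub>0)"] sum.neutral[OF rest]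
    by (simp add: shift_def)
qed

theorem lemma2p2:
  fixes a :: "int \<Rightarrow> complex"
  assumes "fin_supp a" and "a \<noteq> (\<lambda>i. 0)"
  shows "generic a"
  unfolding generic_def
proof (intro allI impI ballI)
  fix S c n
  assume "finite S" and vanish: "\<forall>i. (\<Sum>k\<in>S. c k * shift k a i) = 0" and "n \<in> S"
  obtain m where am: "a m \<noteq> 0" and vanish_above: "\<And>j. m < j \<Longrightarrow> a j = 0"
    using fin_supp_obtain_last_nonzero[OF assms] by blast
  show "c n = 0"
  proof (rule ccontr)
    assume "c n \<noteq> 0"
    define T where "T = {k \<in> S. c k \<noteq> 0}"
    have fin: "finite T" and ne: "T \<noteq> {}"
      using \<open>finite S\<close> \<open>n \<in> S\<close> \<open>c n \<noteq> 0\<close> unfolding T_def by auto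
    have n\<^sub>0: "Min T \<in> S" "c (Min T) \<noteq> 0"
      using Min_in[OF fin ne] unfolding T_def by auto
    have least: "Min T \<le> k" if "k \<in> S" "c k \<noteq> 0" for k
      using Min_le[OF fin, of k] that unfolding T_def by simp
    have "c (Min T) * a m = (\<Sum>k\<in>S. c k * shift k a (m - Min T))"
      using sum_shift_leading_term[OF \<open>finite S\<close> n\<^sub>0(1) least vanish_above] by simp
    also have "\<dots> = 0"
      using vanish by simp
    finally show False
      using n\<^sub>0(2) am by simp
  qed
qed

end
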